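(* Let $S = \{s_1, s_2, \ldots\} \subset \mathbb{N}$, where $s_1, s_2, \ldots$ are distinct, satisfy $d^*(S) = 0$, and let $A$ be a finite alphabet. Then there exists a minimal subshift $X \subset A^{\mathbb{Z}}$ with zero topological entropy such that for every $u \in A^{\mathbb{N}}$ there is $x_u \in X$ with $x_u(s_n) = u(n)$ for all $n \in \mathbb{N}$.
   Context: For a finite set $A$, $A^{\mathbb{Z}}$ carries the product topology and the left shift $\sigma$, $(\sigma x)(n) = x(n+1)$. A subshift is a closed $\sigma$-invariant subset $X \subset A^{\mathbb{Z}}$ (with $\sigma$ restricted to it). It is minimal if for every $x \in X$ the orbit $\{\sigma^n x : n \in \mathbb{Z}\}$ is dense in $X$. For a subshift $X$, $L_n(X)$ denotes the set of words of length $n$ appearing as $x(i+1)\ldots x(i+n)$ for some $x \in X$, $i \in \mathbb{Z}$, and the topological entropy is $h(X,\sigma) = \lim_{n\to\infty} \frac{\ln |L_n(X)|}{n}$. The Banach density of $S \subset \mathbb{N}$ is $d^*(S) = \lim_{n \to \infty} \sup_{k \in \mathbb{N}} \frac{|S \cap \{k, \ldots, k+n-1\}|}{n}$. *)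

theory Defs
  imports "HOL-Analysis.Analysis"
begin

definition full_shift_top :: "(int \<Rightarrow> 'a) topology" where
  "full_shift_top = product_topology (\<lambda>_. discrete_topology UNIV) UNIV"

definition shift :: "(int \<Rightarrow> 'a) \<Rightarrow> (int \<Rightarrow> 'a)" where
  "shift x = (\<lambda>i. x (i + 1))"

definition shift_pow :: "int \<Rightarrow> (int \<Rightarrow> 'a) \<Rightarrow> (int \<Rightarrow> 'a)" where
  "shift_pow k x = (\<lambda>i. x (i + k))"

definition subshift :: "(int \<Rightarrow> 'a) set \<Rightarrow> bool" where
  "subshift X \<longleftrightarrow> closedin full_shift_top X \<and> shift ` X \<subseteq> X"

definition orbit :: "(int \<Rightarrow> 'a) \<Rightarrow> (int \<Rightarrow> 'a) set" where
  "orbit x = {shift_pow k x | k. True}"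

definition minimal_subshift :: "(int \<Rightarrow> 'a) set \<Rightarrow> bool" where
  "minimal_subshift X \<longleftrightarrow> subshift X \<and> X \<noteq> {} \<and>
     (\<forall>x\<in>X. full_shift_top closure_of (orbit x) = X)"

definition language :: "nat \<Rightarrow> (int \<Rightarrow> 'a) set \<Rightarrow> 'a list set" where
  "language n X = {map (\<lambda>j. x (i + 1 + int j)) [0..<n] | x i. x \<in> X}"

definition zero_entropy :: "(int \<Rightarrow> 'a) set \<Rightarrow> bool" where
  "zero_entropy X \<longleftrightarrow> ((\<lambda>n. ln (real (card (language n X))) / real n) \<longlongrightarrow> 0) sequentially"

definition banach_density_zero :: "nat set \<Rightarrow> bool" where
  "banach_density_zero S \<longleftrightarrow>
     ((\<lambda>n. SUP k\<in>UNIV. real (card (S \<inter> {k..<k+n})) / real n) \<longlongrightarrow> 0) sequentially"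

end

theory Submission
  imports Defs "HOL-Library.Sublist"
begin

text \<open>
  The subshift is generated by a hierarchy of blocks. Level \<open>k + 1\<close> blocks are
  concatenations of \<open>N\<^sub>k\<close> level \<open>k\<close> blocks that differ from a fixed periodic
  arrangement of all level \<open>k\<close> blocks in at most \<open>r\<^sub>k\<close> places. Since \<open>S\<close> has Banach
  density zero, \<open>r\<^sub>k\<close> can be chosen with \<open>(k + 1) r\<^sub>k \<le> N\<^sub>k\<close> while every window of
  length \<open>\<ell>\<^sub>k\<^sub>+\<^sub>1\<close> meets \<open>S\<close> in at most \<open>r\<^sub>k\<close> points. Hence writing \<open>u\<close> on \<open>S\<close>
  and the periodic arrangement everywhere else produces a configuration all of whose
  aligned blocks are legal, so it lies in the subshift of configurations whose windows
  occur in blocks. Every level \<open>k\<close> block occurs in every level \<open>k + 1\<close> block, which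
  gives minimality, and \<open>|B\<^sub>k\<^sub>+\<^sub>1| \<le> 2\<^bsup>N\<^sub>k\<^esup> |B\<^sub>k|\<^bsup>r\<^sub>k\<^esup>\<close> gives
  \<open>ln |B\<^sub>k\<^sub>+\<^sub>1| / \<ell>\<^sub>k\<^sub>+\<^sub>1 = O(1 / k)\<close>, hence zero entropy.
\<close>

section \<open>Windows of configurations and words\<close>

definition window :: "(int \<Rightarrow> 'a) \<Rightarrow> int \<Rightarrow> nat \<Rightarrow> 'a list" where
  "window x i n = map (\<lambda>j. x (i + int j)) [0..<n]"

lemma length_window [simp]: "length (window x i n) = n"
  by (simp add: window_def)

lemma nth_window [simp]: "j < n \<Longrightarrow> window x i n ! j = x (i + int j)"
  by (simp add: window_def)

lemma window_add: "window x i (m + n) = window x i m @ window x (i + int m) n"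
  by (rule nth_equalityI) (auto simp: nth_append algebra_simps)

lemma window_mult: "window x i (N * l) = concat (map (\<lambda>j. window x (i + int (j * l)) l) [0..<N])"
proof (induction N)
  case (Suc N)
  have "window x i (Suc N * l) = window x i (N * l) @ window x (i + int (N * l)) l"
    by (metis window_add add.commute mult_Suc)
  then show ?case using Suc by simp
qed (simp add: window_def)

lemma window_cong: "(\<And>j. i \<le> j \<Longrightarrow> j < i + int n \<Longrightarrow> y j = x j) \<Longrightarrow> window y i n = window x i n"
  unfolding window_def by (rule map_cong) auto

lemma window_shift_pow: "window (shift_pow k x) i n = window x (i + k) n"
  by (simp add: window_def shift_pow_def algebra_simps)

lemma sublist_window:
  assumes "a \<le> i" "i + int n \<le> a + int m"
  shows "sublist (window x i n) (window x a m)"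
proof -
  define p where "p = nat (i - a)"
  have m: "m = p + (n + (m - p - n))" and i: "a + int p = i"
    using assms unfolding p_def by linarith+
  have "window x a m = window x a p @ window x i n @ window x (i + int n) (m - p - n)"
    by (subst m) (simp only: window_add i)
  then show ?thesis by (simp only: sublist_appendI)
qed

lemma sublist_windowD:
  assumes "sublist (window y a n) (window x b m)"
  shows "\<exists>p. \<forall>j<n. x (p + int j) = y (a + int j)"
proof -
  from assms obtain P Q where PQ: "window x b m = P @ window y a n @ Q"
    unfolding sublist_def by blast
  have "x (b + int (length P) + int j) = y (a + int j)" if "j < n" for j
  proof -
    have "length P + j < m" using arg_cong[OF PQ, of length] that by simp
    then have "x (b + int (length P) + int j) = window x b m ! (length P + j)"
      by (simp add: algebra_simps)
    also have "\<dots> = y (a + int j)" unfolding PQ using that by (simp add: nth_append)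
    finally show ?thesis .
  qed
  then show ?thesis by blast
qed

lemma sublist_concat: "v \<in> set ws \<Longrightarrow> sublist v (concat ws)"
  by (metis concat.simps(2) concat_append split_list sublist_appendI)

lemma concat_map_concat: "concat (map concat xss) = concat (concat xss)"
  by (induction xss) simp_all

lemma length_concat_uniform: "(\<And>v. v \<in> set ws \<Longrightarrow> length v = l) \<Longrightarrow> length (concat ws) = length ws * l"
  by (induction ws) auto

lemma drop_concat_uniform:
  "(\<And>v. v \<in> set ws \<Longrightarrow> length v = l) \<Longrightarrow> drop (q * l + t) (concat ws) = drop t (concat (drop q ws))"
proof (induction ws arbitrary: q)
  case (Cons v ws)
  then show ?case by (cases q) (simp_all add: algebra_simps)
qed simp

lemma take_drop_append_left:
  "t + n \<le> length xs \<Longrightarrow> take n (drop t (xs @ ys)) = take n (drop t xs)"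
  by simp

lemma sublist_concat_uniformE:
  assumes len: "\<And>v. v \<in> B \<Longrightarrow> length v = l" and "l > 0" and "v\<^sub>0 \<in> B"
    and ws: "set ws \<subseteq> B" and "sublist w (concat ws)"
  obtains t V where "t < l" "set V \<subseteq> B" "length V = length w div l + 2"
    "w = take (length w) (drop t (concat V))"
proof -
  let ?n = "length w" and ?m = "length w div l + 2"
  \<comment> \<open>padding with copies of \<open>v\<^sub>0\<close> lets \<open>V\<close> have exactly \<open>?m\<close> entries\<close>
  from \<open>sublist w (concat ws)\<close> obtain P Q where PQ: "concat ws = P @ w @ Q"
    unfolding sublist_def by blast
  define q t where "q = length P div l" and "t = length P mod l"
  define ws' where "ws' = drop q ws @ replicate ?m v\<^sub>0"
  define V where "V = take ?m ws'"
  have t: "t < l" using \<open>l > 0\<close> unfolding t_def by simp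
  have ws'B: "set ws' \<subseteq> B"
    using ws \<open>v\<^sub>0 \<in> B\<close> set_drop_subset unfolding ws'_def by fastforce
  have V: "set V \<subseteq> B" "length V = ?m"
    using ws'B set_take_subset[of ?m ws'] unfolding V_def ws'_def by auto
  have "q * l + t = length P" unfolding q_def t_def by simp
  then have "w @ Q = drop (q * l + t) (concat ws)"
    using PQ by simp
  also have "\<dots> = drop t (concat (drop q ws))"
    using ws len by (intro drop_concat_uniform) auto
  finally have wQ: "w @ Q = drop t (concat (drop q ws))" .
  have "w = take ?n (w @ Q)" by simp
  also have "\<dots> = take ?n (drop t (concat ws'))"
  proof (cases "w = []")
    case False
    have "?n + length Q = length (concat (drop q ws)) - t"
      using arg_cong[OF wQ, of length] by simp
    moreover have "0 < ?n" using False by simp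
    ultimately have "t + ?n \<le> length (concat (drop q ws))" by arith
    then show ?thesis unfolding wQ ws'_def concat_append by (rule take_drop_append_left[symmetric])
  qed simp
  also have "\<dots> = take ?n (drop t (concat V @ concat (drop ?m ws')))"
    by (metis V_def append_take_drop_id concat_append)
  also have "\<dots> = take ?n (drop t (concat V))"
  proof (rule take_drop_append_left)
    have "length (concat V) = ?m * l"
      using V len length_concat_uniform[of V l] by auto
    moreover have "?n < (?n div l + 1) * l"
      using \<open>l > 0\<close> by (simp add: dividend_less_div_times)
    ultimately show "t + ?n \<le> length (concat V)" using t by simp
  qed
  finally show thesis using that t V by blast
qed

lemma sublist_concat_uniform_has_block:
  assumes len: "\<And>v. v \<in> B \<Longrightarrow> length v = l" and "l > 0" and "set ws \<subseteq> B"
    and "sublist w (concat ws)" and "length w = 2 * l"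
  shows "\<exists>z\<in>B. sublist z w"
proof -
  have "ws \<noteq> []" using assms(4,5) \<open>l > 0\<close> by auto
  then obtain v\<^sub>0 where "v\<^sub>0 \<in> B" using \<open>set ws \<subseteq> B\<close> by (cases ws) auto
  moreover have "length w div l + 2 = 4" using \<open>length w = 2 * l\<close> \<open>l > 0\<close> by simp
  ultimately obtain t V where t: "t < l" and V: "set V \<subseteq> B" "length V = 4"
    and w: "w = take (2 * l) (drop t (concat V))"
    using sublist_concat_uniformE[OF len \<open>l > 0\<close> _ \<open>set ws \<subseteq> B\<close> \<open>sublist w _\<close>]
      \<open>length w = 2 * l\<close> by metis
  then obtain z\<^sub>0 z\<^sub>1 rest where V4: "V = z\<^sub>0 # z\<^sub>1 # rest"
    by (cases V; cases "tl V") auto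
  have "length z\<^sub>0 = l" "z\<^sub>1 \<in> B" "length z\<^sub>1 = l" using V len unfolding V4 by auto
  then have "w = drop t z\<^sub>0 @ z\<^sub>1 @ take t (concat rest)"
    using t unfolding w V4 by simp
  then show ?thesis using \<open>z\<^sub>1 \<in> B\<close> by (metis sublist_appendI)
qed

lemma sublists_of_concats_subset:
  assumes "B \<noteq> {}" and len: "\<And>v. v \<in> B \<Longrightarrow> length v = l" and "l > 0"
  shows "{w. length w = n \<and> (\<exists>ws. set ws \<subseteq> B \<and> sublist w (concat ws))}
    \<subseteq> (\<lambda>(t, V). take n (drop t (concat V))) ` ({..<l} \<times> {V. set V \<subseteq> B \<and> length V = n div l + 2})"
proof
  fix w assume "w \<in> {w. length w = n \<and> (\<exists>ws. set ws \<subseteq> B \<and> sublist w (concat ws))}"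
  then obtain ws where "set ws \<subseteq> B" "sublist w (concat ws)" "n = length w" by blast
  with \<open>B \<noteq> {}\<close> obtain t V where "t < l" "set V \<subseteq> B" "length V = n div l + 2"
    "w = take n (drop t (concat V))"
    using sublist_concat_uniformE[OF len \<open>l > 0\<close>] by blast
  then show "w \<in> (\<lambda>(t, V). take n (drop t (concat V))) `
      ({..<l} \<times> {V. set V \<subseteq> B \<and> length V = n div l + 2})" by force
qed

section \<open>Zero Banach density\<close>

lemma banach_density_zeroD:
  assumes "banach_density_zero S" "e > 0"
  shows "\<exists>n\<^sub>0. \<forall>n\<ge>n\<^sub>0. \<forall>a. real (card (S \<inter> {a..<a+n})) \<le> e * real n"
proof -
  let ?d = "\<lambda>n. SUP k. real (card (S \<inter> {k..<k+n})) / real n"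
  obtain n\<^sub>0 where n\<^sub>0: "\<And>n. n \<ge> n\<^sub>0 \<Longrightarrow> ?d n < e"
    using order_tendstoD(2)[OF assms(1)[unfolded banach_density_zero_def] \<open>e > 0\<close>]
    by (auto simp: eventually_sequentially)
  have "real (card (S \<inter> {a..<a+n})) \<le> e * real n" if "n \<ge> Suc n\<^sub>0" for n a
  proof -
    have "card (S \<inter> {k..<k+n}) \<le> n" for k
      using card_mono[of "{k..<k+n}" "S \<inter> {k..<k+n}"] by simp
    then have "bdd_above (range (\<lambda>k. real (card (S \<inter> {k..<k+n})) / real n))"
      using that by (intro bdd_aboveI[where M=1]) (auto simp: divide_le_eq_1)
    then have "real (card (S \<inter> {a..<a+n})) / real n \<le> ?d n"
      by (rule cSUP_upper[rotated]) simp
    also have "\<dots> < e" using n\<^sub>0 that by simp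
    finally show ?thesis using that by (simp add: divide_less_eq)
  qed
  then show ?thesis by blast
qed

lemma banach_density_zero_sparse_scale:
  assumes "banach_density_zero S" "m > 0"
  shows "\<exists>r\<ge>1. \<forall>a. card (S \<inter> {a..<a + m * r}) \<le> r"
proof -
  obtain n\<^sub>0 where n\<^sub>0: "\<And>n a. n \<ge> n\<^sub>0 \<Longrightarrow> real (card (S \<inter> {a..<a+n})) \<le> real n / real m"
    using banach_density_zeroD[OF assms(1), of "1 / real m"] \<open>m > 0\<close> by auto
  have "card (S \<inter> {a..<a + m * Suc n\<^sub>0}) \<le> Suc n\<^sub>0" for a
  proof -
    have "n\<^sub>0 \<le> m * Suc n\<^sub>0" using \<open>m > 0\<close> by (cases m) auto
    then have "real (card (S \<inter> {a..<a + m * Suc n\<^sub>0})) \<le> real (m * Suc n\<^sub>0) / real m"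
      by (rule n\<^sub>0)
    also have "\<dots> = real (Suc n\<^sub>0)" using \<open>m > 0\<close> by (simp add: field_simps)
    finally show ?thesis by (simp only: of_nat_le_iff)
  qed
  then show ?thesis by (intro exI[of _ "Suc n\<^sub>0"]) auto
qed

section \<open>Words close to a periodic pattern\<close>

definition cyclic_enum :: "'a set \<Rightarrow> nat \<Rightarrow> 'a" where
  "cyclic_enum B j = (let xs = SOME xs. set xs = B \<and> distinct xs in xs ! (j mod length xs))"

lemma cyclic_enum_periodic:
  assumes "finite B" "v \<in> B"
  obtains i where "i < card B" "\<And>j. j mod card B = i \<Longrightarrow> cyclic_enum B j = v"
proof -
  define xs where "xs = (SOME xs. set xs = B \<and> distinct xs)"
  have "set xs = B \<and> distinct xs"
    unfolding xs_def using finite_distinct_list[OF \<open>finite B\<close>] by (rule someI_ex)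
  then have "set xs = B" "length xs = card B" by (auto simp: distinct_card)
  then obtain i where "i < card B" "xs ! i = v" using \<open>v \<in> B\<close> by (metis in_set_conv_nth)
  then show thesis using that \<open>length xs = card B\<close> by (simp add: cyclic_enum_def flip: xs_def)
qed

lemma cyclic_enum_in:
  assumes "finite B" "B \<noteq> {}"
  shows "cyclic_enum B j \<in> B"
proof -
  define xs where "xs = (SOME xs. set xs = B \<and> distinct xs)"
  have "set xs = B"
    unfolding xs_def using someI_ex[OF finite_distinct_list[OF \<open>finite B\<close>]] by blast
  with \<open>B \<noteq> {}\<close> have "xs ! (j mod length xs) \<in> B" by (auto intro: nth_mem)
  then show ?thesis by (simp add: cyclic_enum_def flip: xs_def)
qed

lemma cyclic_enum_occurs:
  assumes "finite B" "v \<in> B" "(r + 1) * card B \<le> N"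
    and "card {j. j < N \<and> g j \<noteq> cyclic_enum B j} \<le> r"
  shows "\<exists>j<N. g j = v"
proof -
  obtain i where i: "i < card B" and iv: "\<And>j. j mod card B = i \<Longrightarrow> cyclic_enum B j = v"
    using cyclic_enum_periodic[OF assms(1,2)] by blast
  define J where "J = (\<lambda>t. i + t * card B) ` {..r}"
  have "inj_on (\<lambda>t. i + t * card B) {..r}" using i by (intro inj_onI) simp
  then have "card J = r + 1" unfolding J_def by (simp add: card_image)
  then have "\<not> J \<subseteq> {j. j < N \<and> g j \<noteq> cyclic_enum B j}"
    using card_mono[of "{j. j < N \<and> g j \<noteq> cyclic_enum B j}" J] assms(4) by auto
  then obtain j where j: "j \<in> J" "\<not> (j < N \<and> g j \<noteq> cyclic_enum B j)" by blast
  then obtain t where t: "t \<le> r" "j = i + t * card B" unfolding J_def by blast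
  have "j < (t + 1) * card B" using t i by simp
  also have "\<dots> \<le> N" using t assms(3) by (meson add_le_mono1 le_trans mult_le_mono1)
  finally have "j < N" .
  moreover have "cyclic_enum B j = v" using t i by (intro iv) simp
  ultimately show ?thesis using j by auto
qed

lemma near_maps_subset:
  "(\<lambda>g. map g [0..<N]) ` {g. (\<forall>j<N. g j \<in> B) \<and> card {j. j < N \<and> g j \<noteq> f j} \<le> r}
    \<subseteq> (\<Union>D\<in>{D. D \<subseteq> {..<N} \<and> card D \<le> r}.
          (\<lambda>h. map (\<lambda>j. if j \<in> D then h j else f j) [0..<N]) ` (D \<rightarrow>\<^sub>E B))"
proof clarify
  fix g assume g: "\<forall>j<N. g j \<in> B" "card {j. j < N \<and> g j \<noteq> f j} \<le> r"
  define D where "D = {j. j < N \<and> g j \<noteq> f j}"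
  have "map g [0..<N] = map (\<lambda>j. if j \<in> D then restrict g D j else f j) [0..<N]"
    by (simp add: D_def)
  moreover have "restrict g D \<in> D \<rightarrow>\<^sub>E B" using g(1) by (auto simp: D_def)
  moreover have "D \<subseteq> {..<N}" "card D \<le> r" using g(2) by (auto simp: D_def)
  ultimately show "map g [0..<N] \<in> (\<Union>D\<in>{D. D \<subseteq> {..<N} \<and> card D \<le> r}.
      (\<lambda>h. map (\<lambda>j. if j \<in> D then h j else f j) [0..<N]) ` (D \<rightarrow>\<^sub>E B))" by blast
qed

lemma card_near_maps_le:
  assumes "finite B" "B \<noteq> {}"
  shows "card ((\<lambda>g. map g [0..<N]) ` {g. (\<forall>j<N. g j \<in> B) \<and> card {j. j < N \<and> g j \<noteq> f j} \<le> r})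
    \<le> 2 ^ N * card B ^ r"
proof -
  define \<D> where "\<D> = {D. D \<subseteq> {..<N} \<and> card D \<le> r}"
  define E where "E D = (\<lambda>h. map (\<lambda>j. if j \<in> D then h j else f j) [0..<N]) ` (D \<rightarrow>\<^sub>E B)" for D
  have fin\<D>: "finite \<D>" and finD: "\<And>D. D \<in> \<D> \<Longrightarrow> finite D"
    unfolding \<D>_def by (auto intro: finite_subset)
  have cardE: "card (E D) \<le> card B ^ r" if "D \<in> \<D>" for D
  proof -
    have "card (E D) \<le> card (D \<rightarrow>\<^sub>E B)" unfolding E_def
      using finD[OF that] \<open>finite B\<close> by (intro card_image_le) (simp add: finite_PiE)
    also have "\<dots> = card B ^ card D" using finD[OF that] by (simp add: card_PiE)
    also have "\<dots> \<le> card B ^ r"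
      using that assms by (intro power_increasing) (auto simp: \<D>_def Suc_le_eq card_gt_0_iff)
    finally show ?thesis .
  qed
  have "finite (E D)" if "D \<in> \<D>" for D
    unfolding E_def using finD[OF that] \<open>finite B\<close> by (simp add: finite_PiE)
  then have "finite (\<Union>D\<in>\<D>. E D)" using fin\<D> by blast
  then have "card ((\<lambda>g. map g [0..<N]) ` {g. (\<forall>j<N. g j \<in> B) \<and> card {j. j < N \<and> g j \<noteq> f j} \<le> r})
      \<le> card (\<Union>D\<in>\<D>. E D)"
    using near_maps_subset[of N B f r] unfolding \<D>_def E_def by (rule card_mono)
  also have "\<dots> \<le> (\<Sum>D\<in>\<D>. card (E D))" by (rule card_UN_le[OF fin\<D>])
  also have "\<dots> \<le> card \<D> * card B ^ r" using sum_bounded_above[of \<D> "\<lambda>D. card (E D)"] cardE by simp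
  also have "card \<D> \<le> card (Pow {..<N})" by (rule card_mono) (auto simp: \<D>_def)
  finally show ?thesis by (simp add: card_Pow)
qed

section \<open>Criteria for minimality and zero entropy\<close>

lemma topspace_full_shift_top [simp]: "topspace full_shift_top = UNIV"
  by (simp add: full_shift_top_def PiE_UNIV_domain)

lemma openin_full_shift_top_cylinder:
  assumes "openin full_shift_top T" "y \<in> T"
  shows "\<exists>m::nat. \<forall>z. (\<forall>j. \<bar>j\<bar> < int m \<longrightarrow> z j = y j) \<longrightarrow> z \<in> T"
proof -
  obtain U where U: "finite {j. U j \<noteq> UNIV}" "y \<in> Pi\<^sub>E UNIV U" "Pi\<^sub>E UNIV U \<subseteq> T"
    using assms unfolding full_shift_top_def openin_product_topology_alt by auto
  obtain m where m: "abs ` {j. U j \<noteq> UNIV} \<subseteq> {..<m}"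
    using U(1) finite_int_iff_bounded by blast
  have "z \<in> T" if "\<forall>j. \<bar>j\<bar> < int (nat m) \<longrightarrow> z j = y j" for z
  proof -
    have "z j \<in> U j" for j
    proof (cases "U j = UNIV")
      case False
      then have "\<bar>j\<bar> < m" using m by auto
      moreover have "m \<le> int (nat m)" by simp
      ultimately have "\<bar>j\<bar> < int (nat m)" by linarith
      then have "z j = y j" using that by simp
      then show ?thesis using U(2) by (simp add: PiE_UNIV_domain Pi_iff)
    qed simp
    then show ?thesis using U(3) by (auto simp: PiE_UNIV_domain)
  qed
  then show ?thesis by blast
qed

lemma closedin_full_shift_top_windows: "closedin full_shift_top {x. \<forall>i n. window x i n \<in> L}"
proof -
  have "openin full_shift_top (- {x. \<forall>i n. window x i n \<in> L})"
    unfolding full_shift_top_def openin_product_topology_alt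
  proof (intro ballI)
    fix x assume "x \<in> - {x. \<forall>i n. window x i n \<in> L}"
    then obtain i n where bad: "window x i n \<notin> L" by blast
    define U where "U j = (if i \<le> j \<and> j < i + int n then {x j} else UNIV)" for j
    have "finite {j. U j \<noteq> UNIV}"
      by (rule finite_subset[of _ "{i..<i + int n}"]) (auto simp: U_def)
    moreover have "x \<in> Pi\<^sub>E UNIV U" by (simp add: PiE_UNIV_domain U_def)
    moreover have "Pi\<^sub>E UNIV U \<subseteq> - {x. \<forall>i n. window x i n \<in> L}"
    proof
      fix z assume "z \<in> Pi\<^sub>E UNIV U"
      then have "z j \<in> U j" for j by (simp add: PiE_UNIV_domain Pi_iff)
      then have "z j = x j" if "i \<le> j" "j < i + int n" for j
        using that by (metis U_def singletonD)
      then have "window z i n = window x i n" by (rule window_cong)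
      then have "window z i n \<notin> L" using bad by simp
      then show "z \<in> - {x. \<forall>i n. window x i n \<in> L}" by blast
    qed
    ultimately show "\<exists>U. finite {j \<in> UNIV. U j \<noteq> topspace (discrete_topology UNIV)} \<and>
        (\<forall>j\<in>UNIV. openin (discrete_topology UNIV) (U j)) \<and> x \<in> Pi\<^sub>E UNIV U \<and>
        Pi\<^sub>E UNIV U \<subseteq> - {x. \<forall>i n. window x i n \<in> L}"
      by (intro exI[of _ U]) simp
  qed
  then show ?thesis by (simp add: closedin_def Compl_eq_Diff_UNIV)
qed

lemma minimal_subshiftI:
  assumes closed: "closedin full_shift_top X" and "X \<noteq> {}"
    and shift_closed: "\<And>k x. x \<in> X \<Longrightarrow> shift_pow k x \<in> X"
    and recurrent: "\<And>x y m. x \<in> X \<Longrightarrow> y \<in> X \<Longrightarrow> \<exists>p. \<forall>j. \<bar>j\<bar> < int m \<longrightarrow> x (p + j) = y j"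
  shows "minimal_subshift X"
proof -
  have "shift x = shift_pow 1 x" for x :: "int \<Rightarrow> 'a"
    by (simp add: shift_def shift_pow_def)
  then have "subshift X" unfolding subshift_def using closed shift_closed by auto
  moreover have "full_shift_top closure_of orbit x = X" if "x \<in> X" for x
  proof
    have "orbit x \<subseteq> X" unfolding orbit_def using shift_closed \<open>x \<in> X\<close> by blast
    then show "full_shift_top closure_of orbit x \<subseteq> X"
      using closed by (rule closure_of_minimal)
    show "X \<subseteq> full_shift_top closure_of orbit x"
    proof (clarsimp simp: in_closure_of)
      fix y T assume "y \<in> X" "y \<in> T" "openin full_shift_top T"
      then obtain m where m: "\<And>z. \<forall>j. \<bar>j\<bar> < int m \<longrightarrow> z j = y j \<Longrightarrow> z \<in> T"
        using openin_full_shift_top_cylinder by blast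
      obtain p where "\<forall>j. \<bar>j\<bar> < int m \<longrightarrow> x (p + j) = y j"
        using recurrent[OF \<open>x \<in> X\<close> \<open>y \<in> X\<close>] by blast
      then have "shift_pow p x \<in> T" by (intro m) (simp add: shift_pow_def add.commute)
      then show "\<exists>z. z \<in> orbit x \<and> z \<in> T" unfolding orbit_def by blast
    qed
  qed
  ultimately show ?thesis unfolding minimal_subshift_def using \<open>X \<noteq> {}\<close> by blast
qed

lemma ln_of_nat_mono:
  assumes "m \<le> n" shows "ln (real m) \<le> ln (real n)"
proof (cases "m = 0")
  case True
  then show ?thesis by (cases n) auto
next
  case False
  with assms show ?thesis by (intro ln_mono) auto
qed

lemma card_language_le_block_cover:
  assumes "finite B" "B \<noteq> {}" and len: "\<forall>v\<in>B. length v = l" and "l > 0"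
    and covered: "\<forall>w\<in>language n X. \<exists>ws. set ws \<subseteq> B \<and> sublist w (concat ws)"
  shows "card (language n X) \<le> l * card B ^ (n div l + 2)"
proof -
  let ?S = "{..<l} \<times> {V. set V \<subseteq> B \<and> length V = n div l + 2}"
  have "finite ?S" using \<open>finite B\<close> by (simp add: finite_lists_length_eq)
  have "length w = n" if "w \<in> language n X" for w
    using that by (auto simp: language_def)
  then have "language n X \<subseteq> {w. length w = n \<and> (\<exists>ws. set ws \<subseteq> B \<and> sublist w (concat ws))}"
    using covered by blast
  also have "\<dots> \<subseteq> (\<lambda>(t, V). take n (drop t (concat V))) ` ?S"
    using sublists_of_concats_subset[OF \<open>B \<noteq> {}\<close> _ \<open>l > 0\<close>] len by blast
  finally have "card (language n X) \<le> card ((\<lambda>(t, V). take n (drop t (concat V))) ` ?S)"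
    using \<open>finite ?S\<close> by (intro card_mono) auto
  also have "\<dots> \<le> card ?S" using \<open>finite ?S\<close> by (rule card_image_le)
  also have "\<dots> = l * card B ^ (n div l + 2)"
    using \<open>finite B\<close> by (simp add: card_cartesian_product card_lists_length_eq)
  finally show ?thesis .
qed

lemma zero_entropyI_block_cover:
  assumes cover: "\<And>\<epsilon>. \<epsilon> > 0 \<Longrightarrow> \<exists>l B. l > 0 \<and> finite B \<and> B \<noteq> {} \<and> (\<forall>v\<in>B. length v = l) \<and>
      ln (card B) \<le> \<epsilon> * l \<and> (\<forall>n. \<forall>w\<in>language n X. \<exists>ws. set ws \<subseteq> B \<and> sublist w (concat ws))"
  shows "zero_entropy X"
  unfolding zero_entropy_def
proof (rule tendstoI)
  fix \<epsilon> :: real assume "\<epsilon> > 0"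
  then obtain l B where "l > 0" "finite B" "B \<noteq> {}" and len: "\<forall>v\<in>B. length v = l"
    and small: "ln (card B) \<le> \<epsilon> / 6 * l"
    and covered: "\<forall>n. \<forall>w\<in>language n X. \<exists>ws. set ws \<subseteq> B \<and> sublist w (concat ws)"
    using cover[of "\<epsilon> / 6"] by auto
  have "eventually (\<lambda>n. ln (real n) / real n < \<epsilon> / 2) sequentially"
    by (rule order_tendstoD(2)[OF lim_ln_over_n]) (use \<open>\<epsilon> > 0\<close> in simp)
  moreover have "eventually (\<lambda>n. n \<ge> l) sequentially" by (rule eventually_ge_at_top)
  ultimately show "eventually (\<lambda>n. dist (ln (card (language n X)) / real n) 0 < \<epsilon>) sequentially"
  proof eventually_elim
    case (elim n)
    let ?m = "n div l + 2"
    have "n > 0" using elim \<open>l > 0\<close> by simp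
    have "ln (card (language n X)) \<le> ln (real (l * card B ^ ?m))"
      using card_language_le_block_cover[OF \<open>finite B\<close> \<open>B \<noteq> {}\<close> len \<open>l > 0\<close>] covered
      by (intro ln_of_nat_mono) blast
    also have "\<dots> = ln l + ?m * ln (card B)"
      using \<open>l > 0\<close> \<open>finite B\<close> \<open>B \<noteq> {}\<close> by (simp add: ln_mult ln_realpow card_gt_0_iff algebra_simps)
    also have "\<dots> \<le> ln n + 3 * (n / l) * (\<epsilon> / 6 * l)"
    proof (rule add_mono)
      show "ln l \<le> ln n" using elim \<open>l > 0\<close> by simp
      have "real (n div l) \<le> n / l" by (rule of_nat_div_le_of_nat)
      moreover have "1 \<le> n / l" using elim \<open>l > 0\<close> by simp
      ultimately have "real ?m \<le> 3 * (n / l)" by simp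
      moreover have "ln (card B) \<ge> 0" using \<open>finite B\<close> \<open>B \<noteq> {}\<close> by (simp add: Suc_le_eq card_gt_0_iff)
      ultimately show "?m * ln (card B) \<le> 3 * (n / l) * (\<epsilon> / 6 * l)"
        using small by (intro mult_mono) auto
    qed
    also have "\<dots> = ln n + n * (\<epsilon> / 2)" using \<open>l > 0\<close> by (simp add: field_simps)
    finally have "ln (card (language n X)) / n \<le> ln n / n + \<epsilon> / 2"
      using \<open>n > 0\<close> by (simp add: divide_simps mult.commute)
    with elim(1) have "ln (card (language n X)) / n < \<epsilon>" by linarith
    moreover have "ln (card (language n X)) \<ge> 0" by (cases "card (language n X)") auto
    ultimately show ?case by (simp add: dist_real_def)
  qed
qed

section \<open>The hierarchy of blocks\<close>

locale sparse_embedding =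
  fixes A :: "'a set" and s :: "nat \<Rightarrow> nat"
  assumes finite_A: "finite A" and A_nonempty: "A \<noteq> {}"
    and inj_s: "inj s" and density_zero: "banach_density_zero (range s)"
begin

definition sparse_rate :: "nat \<Rightarrow> nat" where
  "sparse_rate m = (LEAST r. 1 \<le> r \<and> (\<forall>a. card (range s \<inter> {a..<a + m * r}) \<le> r))"

lemma sparse_rate_bounds:
  assumes "m > 0"
  shows "1 \<le> sparse_rate m" "card (range s \<inter> {a..<a + m * sparse_rate m}) \<le> sparse_rate m"
  using LeastI_ex[OF banach_density_zero_sparse_scale[OF density_zero assms]]
  unfolding sparse_rate_def by auto

text \<open>
  The factor \<open>M = 2 (k + 1) (|B| + 1)\<close> makes \<open>N \<ge> (r + 1) |B|\<close>, so every level \<open>k\<close>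
  block survives the at most \<open>r\<close> deviations from the cyclic enumeration, and
  \<open>N \<ge> (k + 1) r\<close>, which drives the entropy to zero.
\<close>

primrec level :: "nat \<Rightarrow> nat \<times> 'a list set" where
  "level 0 = (1, (\<lambda>c. [c]) ` A)"
| "level (Suc k) =
    (let (l, B) = level k; M = 2 * (k + 1) * (card B + 1); r = sparse_rate (M * l); N = M * r
     in (N * l, {concat (map g [0..<N]) | g. (\<forall>j<N. g j \<in> B) \<and>
                   card {j. j < N \<and> g j \<noteq> cyclic_enum B j} \<le> r}))"

definition block_len :: "nat \<Rightarrow> nat" where "block_len k = fst (level k)"
definition blocks :: "nat \<Rightarrow> 'a list set" where "blocks k = snd (level k)"
definition defects :: "nat \<Rightarrow> nat" where
  "defects k = sparse_rate (2 * (k + 1) * (card (blocks k) + 1) * block_len k)"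
definition arity :: "nat \<Rightarrow> nat" where
  "arity k = 2 * (k + 1) * (card (blocks k) + 1) * defects k"
definition filler :: "nat \<Rightarrow> nat \<Rightarrow> 'a list" where "filler k = cyclic_enum (blocks k)"

lemma block_len_0: "block_len 0 = 1" and blocks_0: "blocks 0 = (\<lambda>c. [c]) ` A"
  by (simp_all add: block_len_def blocks_def)

lemma block_len_Suc: "block_len (Suc k) = arity k * block_len k"
  by (simp add: block_len_def blocks_def arity_def defects_def split_def Let_def)

lemma blocks_Suc: "blocks (Suc k) = {concat (map g [0..<arity k]) | g. (\<forall>j<arity k. g j \<in> blocks k) \<and>
    card {j. j < arity k \<and> g j \<noteq> filler k j} \<le> defects k}"
  by (simp add: block_len_def blocks_def arity_def defects_def filler_def split_def Let_def)

lemma defects_block_len_Suc: "block_len (Suc k) = 2 * (k + 1) * (card (blocks k) + 1) * block_len k * defects k"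
  by (simp add: block_len_Suc arity_def algebra_simps)

lemma block_len_pos: "block_len k > 0"
proof (induction k)
  case (Suc k)
  then show ?case
    using sparse_rate_bounds(1)[of "2 * (k + 1) * (card (blocks k) + 1) * block_len k"]
    by (simp add: defects_block_len_Suc defects_def)
qed (simp add: block_len_0)

lemma defects_pos: "1 \<le> defects k"
  unfolding defects_def using block_len_pos by (intro sparse_rate_bounds(1)) simp

lemma defects_window: "card (range s \<inter> {a..<a + block_len (Suc k)}) \<le> defects k"
  unfolding defects_block_len_Suc defects_def using block_len_pos by (intro sparse_rate_bounds(2)) simp

lemma arity_ge_card: "(defects k + 1) * card (blocks k) \<le> arity k"
proof -
  have "(defects k + 1) * card (blocks k) \<le> (2 * defects k) * (card (blocks k) + 1)"
    using defects_pos[of k] by (intro mult_le_mono) auto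
  also have "\<dots> \<le> arity k" unfolding arity_def by simp
  finally show ?thesis .
qed

lemma arity_ge_defects: "(k + 1) * defects k \<le> arity k"
proof -
  have "k + 1 \<le> 2 * (k + 1) * (card (blocks k) + 1)" by simp
  then show ?thesis unfolding arity_def by (rule mult_le_mono1)
qed

lemma blocks_wellformed:
  "finite (blocks k) \<and> blocks k \<noteq> {} \<and> blocks k \<subseteq> {w. set w \<subseteq> A \<and> length w = block_len k}"
proof (induction k)
  case 0
  then show ?case using finite_A A_nonempty by (auto simp: block_len_0 blocks_0)
next
  case (Suc k)
  then have IH: "finite (blocks k)" "blocks k \<noteq> {}"
    "\<And>w. w \<in> blocks k \<Longrightarrow> set w \<subseteq> A \<and> length w = block_len k" by auto
  have sub: "blocks (Suc k) \<subseteq> {w. set w \<subseteq> A \<and> length w = block_len (Suc k)}"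
  proof
    fix w assume "w \<in> blocks (Suc k)"
    then obtain g where w: "w = concat (map g [0..<arity k])" and g: "\<forall>j<arity k. g j \<in> blocks k"
      unfolding blocks_Suc by blast
    then have "\<forall>v\<in>set (map g [0..<arity k]). set v \<subseteq> A \<and> length v = block_len k" using IH(3) by auto
    then show "w \<in> {w. set w \<subseteq> A \<and> length w = block_len (Suc k)}"
      using length_concat_uniform[of "map g [0..<arity k]" "block_len k"] unfolding w block_len_Suc by auto
  qed
  moreover have "finite (blocks (Suc k))"
    using finite_lists_length_eq[OF finite_A] by (rule finite_subset[OF sub])
  moreover have "concat (map (filler k) [0..<arity k]) \<in> blocks (Suc k)"
    unfolding blocks_Suc filler_def using cyclic_enum_in[OF IH(1,2)] by auto
  ultimately show ?case using block_len_pos by blast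
qed

lemma finite_blocks: "finite (blocks k)"
  and blocks_nonempty: "blocks k \<noteq> {}"
  and length_block: "w \<in> blocks k \<Longrightarrow> length w = block_len k"
  using blocks_wellformed[of k] by auto

lemma filler_in_blocks: "filler k j \<in> blocks k"
  unfolding filler_def by (rule cyclic_enum_in[OF finite_blocks blocks_nonempty])

lemma card_blocks_pos: "card (blocks k) > 0"
  using finite_blocks blocks_nonempty by (simp add: card_gt_0_iff)

lemma arity_ge_4: "4 \<le> arity k"
proof -
  have "2 * 1 * 2 * 1 \<le> arity k"
    unfolding arity_def using defects_pos[of k] card_blocks_pos[of k] by (intro mult_le_mono) auto
  then show ?thesis by simp
qed

lemma block_len_ge: "k + 1 \<le> block_len k"
proof (induction k)
  case (Suc k)
  have "2 * block_len k \<le> block_len (Suc k)"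
    using arity_ge_4[of k] by (simp add: block_len_Suc)
  then show ?case using Suc block_len_pos[of k] by linarith
qed (simp add: block_len_0)

lemma card_blocks_le: "card (blocks k) \<le> card A ^ block_len k"
proof -
  have "card (blocks k) \<le> card {w. set w \<subseteq> A \<and> length w = block_len k}"
    using blocks_wellformed[of k] finite_lists_length_eq[OF finite_A] by (intro card_mono) auto
  then show ?thesis by (simp add: card_lists_length_eq[OF finite_A])
qed

lemma card_blocks_Suc_le: "card (blocks (Suc k)) \<le> 2 ^ arity k * card (blocks k) ^ defects k"
proof -
  let ?G = "{g. (\<forall>j<arity k. g j \<in> blocks k) \<and> card {j. j < arity k \<and> g j \<noteq> filler k j} \<le> defects k}"
  have "blocks (Suc k) = concat ` (\<lambda>g. map g [0..<arity k]) ` ?G"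
    unfolding blocks_Suc by blast
  moreover have "finite ((\<lambda>g. map g [0..<arity k]) ` ?G)"
    by (rule finite_subset[of _ "{xs. set xs \<subseteq> blocks k \<and> length xs = arity k}"])
      (auto simp: finite_lists_length_eq finite_blocks)
  ultimately have "card (blocks (Suc k)) \<le> card ((\<lambda>g. map g [0..<arity k]) ` ?G)"
    by (simp add: card_image_le)
  also have "\<dots> \<le> 2 ^ arity k * card (blocks k) ^ defects k"
    by (rule card_near_maps_le[OF finite_blocks blocks_nonempty])
  finally show ?thesis .
qed

lemma ln_card_blocks_Suc_le:
  "real (k + 1) * ln (card (blocks (Suc k))) \<le> (ln 2 + ln (card A)) * block_len (Suc k)"
proof -
  let ?N = "arity k" and ?r = "defects k" and ?b = "card (blocks k)" and ?l = "block_len k"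
  have "ln (card (blocks (Suc k))) \<le> ln (real (2 ^ ?N * ?b ^ ?r))"
    by (rule ln_of_nat_mono[OF card_blocks_Suc_le])
  also have "\<dots> = ?N * ln 2 + ?r * ln ?b"
    using card_blocks_pos[of k] by (simp add: ln_mult ln_realpow)
  also have "\<dots> \<le> ?N * ln 2 + ?r * (?l * ln (card A))"
  proof -
    have "ln ?b \<le> ln (real (card A ^ ?l))" by (rule ln_of_nat_mono[OF card_blocks_le])
    also have "\<dots> = ?l * ln (card A)"
      using finite_A A_nonempty by (simp add: ln_realpow card_gt_0_iff)
    finally show ?thesis by (simp add: mult_left_mono)
  qed
  finally have "(k + 1) * ln (card (blocks (Suc k)))
      \<le> (k + 1) * (?N * ln 2 + ?r * (?l * ln (card A)))"
    by (rule mult_left_mono) simp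
  also have "\<dots> = real (k + 1) * ?N * ln 2 + real ((k + 1) * ?r) * (?l * ln (card A))"
    by (simp add: algebra_simps)
  also have "\<dots> \<le> real ?l * ?N * ln 2 + real ?N * (?l * ln (card A))"
  proof (rule add_mono)
    show "real (k + 1) * ?N * ln 2 \<le> real ?l * ?N * ln 2"
      using block_len_ge[of k] by (intro mult_right_mono) auto
    have "ln (card A) \<ge> 0" using finite_A A_nonempty by (simp add: card_gt_0_iff Suc_le_eq)
    then show "real ((k + 1) * ?r) * (?l * ln (card A)) \<le> real ?N * (?l * ln (card A))"
      by (intro mult_right_mono of_nat_mono arity_ge_defects) simp
  qed
  also have "\<dots> = (ln 2 + ln (card A)) * block_len (Suc k)"
    by (simp add: block_len_Suc algebra_simps)
  finally show ?thesis .
qed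

section \<open>The block subshift\<close>

lemma block_sublist_Suc:
  assumes "v \<in> blocks k" "w \<in> blocks (Suc k)"
  shows "sublist v w"
proof -
  from assms(2) obtain g where w: "w = concat (map g [0..<arity k])"
    and "\<forall>j<arity k. g j \<in> blocks k" "card {j. j < arity k \<and> g j \<noteq> filler k j} \<le> defects k"
    unfolding blocks_Suc by blast
  then obtain j where "j < arity k" "g j = v"
    using cyclic_enum_occurs[OF finite_blocks assms(1) arity_ge_card] unfolding filler_def by blast
  then show ?thesis unfolding w by (intro sublist_concat) auto
qed

lemma block_sublist_above:
  assumes "v \<in> blocks k" "k < K" "w \<in> blocks K"
  shows "sublist v w"
  using assms(2,3)
proof (induction K arbitrary: w)
  case (Suc K)
  show ?case
  proof (cases "k = K")
    case True
    then show ?thesis using block_sublist_Suc assms(1) Suc.prems(2) by blast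
  next
    case False
    obtain u where "u \<in> blocks K" using blocks_nonempty by blast
    then have "sublist v u" using Suc False by simp
    moreover have "sublist u w" by (rule block_sublist_Suc[OF \<open>u \<in> blocks K\<close> Suc.prems(2)])
    ultimately show ?thesis by (rule sublist_order.order_trans)
  qed
qed simp

lemma block_concat_lower:
  assumes "k \<le> K" "v \<in> blocks K"
  shows "\<exists>ws. set ws \<subseteq> blocks k \<and> v = concat ws"
  using assms
proof (induction K arbitrary: v rule: dec_induct)
  case base
  then show ?case by (intro exI[of _ "[v]"]) simp
next
  case (step K)
  then obtain g where v: "v = concat (map g [0..<arity K])" and g: "\<forall>j<arity K. g j \<in> blocks K"
    unfolding blocks_Suc by blast
  then have "\<forall>j. \<exists>ws. j < arity K \<longrightarrow> set ws \<subseteq> blocks k \<and> g j = concat ws"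
    using step.IH by blast
  then obtain W where W: "\<And>j. j < arity K \<Longrightarrow> set (W j) \<subseteq> blocks k \<and> g j = concat (W j)"
    using choice[of "\<lambda>j ws. j < arity K \<longrightarrow> set ws \<subseteq> blocks k \<and> g j = concat ws"] by blast
  then have "map g [0..<arity K] = map concat (map W [0..<arity K])" by simp
  then have "v = concat (concat (map W [0..<arity K]))"
    unfolding v by (simp only: concat_map_concat)
  moreover have "set (concat (map W [0..<arity K])) \<subseteq> blocks k" using W by fastforce
  ultimately show ?case by blast
qed

definition block_language :: "'a list set" where
  "block_language = {w. \<exists>k. \<exists>v\<in>blocks k. sublist w v}"

definition block_shift :: "(int \<Rightarrow> 'a) set" where
  "block_shift = {x. \<forall>i n. window x i n \<in> block_language}"

lemma block_language_sublist_all_blocks: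
  assumes "w \<in> block_language"
  obtains K\<^sub>0 where "\<And>K v. K \<ge> K\<^sub>0 \<Longrightarrow> v \<in> blocks K \<Longrightarrow> sublist w v"
proof -
  from assms obtain k u where "u \<in> blocks k" "sublist w u" unfolding block_language_def by blast
  then have "sublist w v" if "K \<ge> Suc k" "v \<in> blocks K" for K v
    using block_sublist_above[of u k K v] that sublist_order.order_trans by auto
  then show thesis using that by blast
qed

lemma block_language_sublist_concat:
  assumes "w \<in> block_language"
  shows "\<exists>ws. set ws \<subseteq> blocks k \<and> sublist w (concat ws)"
proof -
  obtain K\<^sub>0 where K\<^sub>0: "\<And>K v. K \<ge> K\<^sub>0 \<Longrightarrow> v \<in> blocks K \<Longrightarrow> sublist w v"
    using block_language_sublist_all_blocks[OF assms] by blast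
  obtain v where v: "v \<in> blocks (max K\<^sub>0 k)" using blocks_nonempty by blast
  then obtain ws where "set ws \<subseteq> blocks k" "v = concat ws"
    using block_concat_lower[of k "max K\<^sub>0 k" v] by auto
  moreover have "sublist w v" using K\<^sub>0[OF _ v] by simp
  ultimately show ?thesis by blast
qed

lemma closedin_block_shift: "closedin full_shift_top block_shift"
  unfolding block_shift_def by (rule closedin_full_shift_top_windows)

lemma shift_pow_block_shift: "x \<in> block_shift \<Longrightarrow> shift_pow k x \<in> block_shift"
  by (simp add: block_shift_def window_shift_pow)

lemma block_shift_recurrent:
  assumes "x \<in> block_shift" "y \<in> block_shift"
  shows "\<exists>p. \<forall>j. \<bar>j\<bar> < int m \<longrightarrow> x (p + j) = y j"
proof -
  have "window y (- int m) (2 * m) \<in> block_language"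
    using assms(2) unfolding block_shift_def by blast
  then obtain K where K: "\<And>v. v \<in> blocks K \<Longrightarrow> sublist (window y (- int m) (2 * m)) v"
    by (rule block_language_sublist_all_blocks) blast
  have "window x 0 (2 * block_len (Suc K)) \<in> block_language"
    using assms(1) unfolding block_shift_def by blast
  then obtain ws where ws: "set ws \<subseteq> blocks (Suc K)"
    and "sublist (window x 0 (2 * block_len (Suc K))) (concat ws)"
    using block_language_sublist_concat by blast
  then obtain z where z: "z \<in> blocks (Suc K)" "sublist z (window x 0 (2 * block_len (Suc K)))"
    using sublist_concat_uniform_has_block[OF length_block block_len_pos ws] by fastforce
  obtain v where v: "v \<in> blocks K" using blocks_nonempty by blast
  have "sublist (window y (- int m) (2 * m)) z"
    using K[OF v] block_sublist_Suc[OF v z(1)] by (rule sublist_order.order_trans)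
  then have "sublist (window y (- int m) (2 * m)) (window x 0 (2 * block_len (Suc K)))"
    using z(2) by (rule sublist_order.order_trans)
  then obtain p where p: "\<forall>j<2 * m. x (p + int j) = y (- int m + int j)"
    using sublist_windowD by blast
  have "x (p + int m + j) = y j" if "\<bar>j\<bar> < int m" for j
  proof -
    define t where "t = nat (j + int m)"
    have "t < 2 * m" "int t = j + int m" using that unfolding t_def by auto
    then have "x (p + int t) = y (- int m + int t)" using p by blast
    moreover have "p + int t = p + int m + j" "- int m + int t = j" using \<open>int t = j + int m\<close> by simp_all
    ultimately show ?thesis by simp
  qed
  then show ?thesis by blast
qed

lemma zero_entropy_block_shift: "zero_entropy block_shift"
proof (rule zero_entropyI_block_cover)
  fix \<epsilon> :: real assume "\<epsilon> > 0"
  obtain k :: nat where "(ln 2 + ln (card A)) / \<epsilon> < k"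
    using reals_Archimedean2 by blast
  then have k: "(ln 2 + ln (card A)) / \<epsilon> \<le> k + 1" by simp
  have "real (k + 1) * ln (card (blocks (Suc k))) \<le> (ln 2 + ln (card A)) * block_len (Suc k)"
    by (rule ln_card_blocks_Suc_le)
  also have "\<dots> \<le> ((k + 1) * \<epsilon>) * block_len (Suc k)"
    using k \<open>\<epsilon> > 0\<close> by (intro mult_right_mono) (auto simp: divide_le_eq)
  finally have small: "ln (card (blocks (Suc k))) \<le> \<epsilon> * block_len (Suc k)"
    by (simp add: mult.assoc)
  have covered: "\<exists>ws. set ws \<subseteq> blocks (Suc k) \<and> sublist w (concat ws)"
    if "w \<in> language n block_shift" for n w
  proof -
    from that obtain x i where "x \<in> block_shift" "w = window x (i + 1) n"
      by (auto simp: language_def window_def algebra_simps)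
    then show ?thesis
      using block_language_sublist_concat unfolding block_shift_def by blast
  qed
  show "\<exists>l B. l > 0 \<and> finite B \<and> B \<noteq> {} \<and> (\<forall>v\<in>B. length v = l) \<and>
      ln (card B) \<le> \<epsilon> * l \<and> (\<forall>n. \<forall>w\<in>language n block_shift. \<exists>ws. set ws \<subseteq> B \<and> sublist w (concat ws))"
    by (intro exI[of _ "block_len (Suc k)"] exI[of _ "blocks (Suc k)"])
      (use small covered in \<open>simp add: block_len_pos finite_blocks blocks_nonempty length_block\<close>)
qed

section \<open>Embedding prescribed values\<close>

text \<open>
  Level \<open>k\<close> blocks of the embedded configurations start at the positions congruent to
  \<open>-offset k\<close> modulo \<open>block_len k\<close>. These grids are nested, and the level \<open>k\<close> block
  starting at \<open>-offset k\<close> exhausts the integers as \<open>k\<close> grows. Off \<open>S\<close>, a position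
  copies the filler of the lowest level \<open>k\<close> at which its level \<open>k + 1\<close> block meets \<open>S\<close>
  while its level \<open>k\<close> sub-block does not.
\<close>

definition offset :: "nat \<Rightarrow> nat" where "offset k = (\<Sum>i<k. block_len i)"

definition aligned :: "nat \<Rightarrow> int \<Rightarrow> bool" where
  "aligned k a \<longleftrightarrow> int (block_len k) dvd a + int (offset k)"

definition block_start :: "nat \<Rightarrow> int \<Rightarrow> int" where
  "block_start k i = i - (i + int (offset k)) mod int (block_len k)"

definition hits :: "nat \<Rightarrow> int \<Rightarrow> bool" where
  "hits k a \<longleftrightarrow> (\<exists>n. a \<le> int (s n) \<and> int (s n) < a + int (block_len k))"

definition embed :: "(nat \<Rightarrow> 'a) \<Rightarrow> int \<Rightarrow> 'a" where
  "embed u i =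
    (if i \<in> range (\<lambda>n. int (s n)) then u (inv s (nat i))
     else let k = LEAST k. hits (Suc k) (block_start (Suc k) i); d = nat (i - block_start (Suc k) i)
          in filler k (d div block_len k) ! (d mod block_len k))"

lemma offset_Suc: "offset (Suc k) = offset k + block_len k"
  by (simp add: offset_def)

lemma offset_ge: "k \<le> offset k"
proof (induction k)
  case (Suc k)
  then show ?case using block_len_pos[of k] by (simp add: offset_Suc)
qed (simp add: offset_def)

lemma offset_le: "2 * offset k \<le> block_len k"
proof (induction k)
  case (Suc k)
  have "4 * block_len k \<le> block_len (Suc k)" using arity_ge_4[of k] by (simp add: block_len_Suc)
  then show ?case using Suc by (simp add: offset_Suc)
qed (simp add: offset_def)

lemma aligned_block_start: "aligned k (block_start k i)"
proof -
  let ?c = "i + int (offset k)"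
  have "block_start k i + int (offset k) = ?c - ?c mod int (block_len k)"
    by (simp add: block_start_def)
  also have "\<dots> = int (block_len k) * (?c div int (block_len k))" by (rule minus_mod_eq_mult_div)
  finally show ?thesis unfolding aligned_def by simp
qed

lemma block_start_le: "block_start k i \<le> i"
  using block_len_pos[of k] by (simp add: block_start_def)

lemma less_block_start: "i < block_start k i + int (block_len k)"
  using block_len_pos[of k] by (simp add: block_start_def)

lemma block_start_eqI:
  assumes "aligned k a" "a \<le> i" "i < a + int (block_len k)"
  shows "block_start k i = a"
proof -
  obtain c where "a + int (offset k) = int (block_len k) * c"
    using assms(1) unfolding aligned_def by (elim dvdE)
  then have "i + int (offset k) = (i - a) + int (block_len k) * c" by simp
  then have "(i + int (offset k)) mod int (block_len k) = ((i - a) + int (block_len k) * c) mod int (block_len k)"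
    by (simp only:)
  also have "\<dots> = (i - a) mod int (block_len k)" by simp
  also have "\<dots> = i - a" using assms(2,3) by simp
  finally show ?thesis by (simp add: block_start_def)
qed

lemma aligned_Suc_sub:
  assumes "aligned (Suc k) a"
  shows "aligned k (a + int (j * block_len k))"
proof -
  have "int (block_len k) dvd int (block_len (Suc k))" by (simp add: block_len_Suc)
  then have "int (block_len k) dvd a + int (offset (Suc k))"
    using assms unfolding aligned_def by (rule dvd_trans)
  then have "int (block_len k) dvd (a + int (offset k)) + int (block_len k)"
    by (simp only: offset_Suc of_nat_add add.assoc)
  then have "int (block_len k) dvd a + int (offset k)"
    using dvd_add_left_iff[OF dvd_refl] by blast
  moreover have "int (block_len k) dvd int (j * block_len k)" by simp
  ultimately have "int (block_len k) dvd (a + int (offset k)) + int (j * block_len k)"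
    by (rule dvd_add)
  then show ?thesis unfolding aligned_def by (simp only: ac_simps)
qed

lemma block_start_Suc:
  shows "nat (i - block_start (Suc k) i) div block_len k < arity k"
    and "block_start k i = block_start (Suc k) i + int (nat (i - block_start (Suc k) i) div block_len k * block_len k)"
proof -
  define a where "a = block_start (Suc k) i"
  define d where "d = nat (i - a)"
  have d: "int d = i - a" "d < arity k * block_len k"
    using less_block_start[of i "Suc k"] block_start_le[of "Suc k" i]
    unfolding d_def a_def block_len_Suc by linarith+
  then show "nat (i - block_start (Suc k) i) div block_len k < arity k"
    unfolding a_def[symmetric] d_def[symmetric] by (simp add: div_less_iff_less_mult block_len_pos)
  have "d div block_len k * block_len k \<le> d" "d < d div block_len k * block_len k + block_len k"
    using dividend_less_div_times[OF block_len_pos, of d k] by (simp_all add: add.commute)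
  then have "a + int (d div block_len k * block_len k) \<le> i" "i < a + int (d div block_len k * block_len k) + int (block_len k)"
    using d(1) by linarith+
  moreover have "aligned k (a + int (d div block_len k * block_len k))"
    unfolding a_def by (intro aligned_Suc_sub aligned_block_start)
  ultimately show "block_start k i = block_start (Suc k) i + int (nat (i - block_start (Suc k) i) div block_len k * block_len k)"
    unfolding a_def[symmetric] d_def[symmetric] by (intro block_start_eqI)
qed

lemma hits_block_start_Suc:
  assumes "hits k (block_start k i)"
  shows "hits (Suc k) (block_start (Suc k) i)"
proof -
  let ?a = "block_start (Suc k) i" and ?j = "nat (i - block_start (Suc k) i) div block_len k"
  have "?j + 1 \<le> arity k" using block_start_Suc(1)[of i k] by simp
  then have "int ((?j + 1) * block_len k) \<le> int (block_len (Suc k))"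
    unfolding block_len_Suc by (intro of_nat_mono mult_le_mono1)
  then have "int (?j * block_len k) + int (block_len k) \<le> int (block_len (Suc k))" by simp
  moreover obtain n where "block_start k i \<le> int (s n)" "int (s n) < block_start k i + int (block_len k)"
    using assms unfolding hits_def by blast
  ultimately have "?a \<le> int (s n)" "int (s n) < ?a + int (block_len (Suc k))"
    unfolding block_start_Suc(2)[of k i] by linarith+
  then show ?thesis unfolding hits_def by blast
qed

lemma hits_block_start_mono:
  assumes "hits k (block_start k i)" "k \<le> K"
  shows "hits K (block_start K i)"
  using assms(2,1) by (induction K rule: dec_induct) (simp_all add: hits_block_start_Suc)

lemma embed_at: "embed u (int (s n)) = u n"
  using inj_s by (simp add: embed_def)

lemma Least_hits_block_start:
  assumes "hits (Suc k) (block_start (Suc k) i)" "\<not> hits k (block_start k i)"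
  shows "(LEAST m. hits (Suc m) (block_start (Suc m) i)) = k"
proof (rule Least_equality)
  show "k \<le> m" if "hits (Suc m) (block_start (Suc m) i)" for m
  proof (rule ccontr)
    assume "\<not> k \<le> m"
    then show False using hits_block_start_mono[OF that] assms(2) by simp
  qed
qed (rule assms(1))

lemma embed_unhit_subblock:
  assumes "aligned (Suc k) a" "hits (Suc k) a" "j < arity k" "\<not> hits k (a + int (j * block_len k))"
  shows "window (embed u) (a + int (j * block_len k)) (block_len k) = filler k j"
proof (rule nth_equalityI)
  show "length (window (embed u) (a + int (j * block_len k)) (block_len k)) = length (filler k j)"
    using length_block[OF filler_in_blocks] by simp
  fix t assume "t < length (window (embed u) (a + int (j * block_len k)) (block_len k))"
  then have t: "t < block_len k" by simp
  let ?b = "a + int (j * block_len k)" and ?i = "a + int (j * block_len k) + int t"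
  have "?i \<notin> range (\<lambda>n. int (s n))"
  proof
    assume "?i \<in> range (\<lambda>n. int (s n))"
    then obtain n where "int (s n) = ?i" by auto
    then have "hits k ?b" unfolding hits_def using t by (intro exI[of _ n]) simp
    then show False using assms(4) by contradiction
  qed
  have "j * block_len k + t < arity k * block_len k"
  proof -
    have "(j + 1) * block_len k \<le> arity k * block_len k" using assms(3) by (intro mult_le_mono1) simp
    then show ?thesis using t by simp
  qed
  then have "int (j * block_len k + t) < int (block_len (Suc k))" unfolding block_len_Suc by (simp only: of_nat_less_iff)
  then have "block_start (Suc k) ?i = a"
    using assms(1) by (intro block_start_eqI) simp_all
  moreover have "block_start k ?i = ?b"
    using t by (intro block_start_eqI aligned_Suc_sub assms(1)) auto
  moreover have "(LEAST m. hits (Suc m) (block_start (Suc m) ?i)) = k"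
    using assms(2,4) \<open>block_start (Suc k) ?i = a\<close> \<open>block_start k ?i = ?b\<close>
    by (intro Least_hits_block_start) simp_all
  moreover have "?i - a = int (t + j * block_len k)" by simp
  then have "nat (?i - a) = t + j * block_len k" by (simp only: nat_int)
  then have "nat (?i - a) div block_len k = j" "nat (?i - a) mod block_len k = t"
    using t block_len_pos[of k] by simp_all
  ultimately have "embed u ?i = filler k j ! t"
    using \<open>?i \<notin> _\<close> unfolding embed_def Let_def by (simp only: if_False)
  then show "window (embed u) ?b (block_len k) ! t = filler k j ! t"
    using t by simp
qed

lemma card_hit_subblocks_le: "card {j. j < arity k \<and> hits k (a + int (j * block_len k))} \<le> defects k"
proof -
  let ?S = "range s \<inter> {nat a..<nat a + block_len (Suc k)}"
  have "{j. j < arity k \<and> hits k (a + int (j * block_len k))} \<subseteq> (\<lambda>p. nat ((int p - a) div int (block_len k))) ` ?S"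
  proof
    fix j assume "j \<in> {j. j < arity k \<and> hits k (a + int (j * block_len k))}"
    then obtain n where j: "j < arity k" and n: "a + int (j * block_len k) \<le> int (s n)"
      "int (s n) < a + int (j * block_len k) + int (block_len k)" unfolding hits_def by auto
    have "(j + 1) * block_len k \<le> block_len (Suc k)" using j unfolding block_len_Suc by (intro mult_le_mono1) simp
    then have "j * block_len k + block_len k \<le> block_len (Suc k)" by (simp add: algebra_simps)
    then have "int (j * block_len k) + int (block_len k) \<le> int (block_len (Suc k))"
      by (simp only: of_nat_add[symmetric] of_nat_le_iff)
    then have "a \<le> int (s n)" "int (s n) < int (nat a) + int (block_len (Suc k))"
      using n by linarith+
    then have "nat a \<le> s n" "s n < nat a + block_len (Suc k)"
      by (simp_all only: nat_le_iff of_nat_add[symmetric] of_nat_less_iff)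
    then have "s n \<in> ?S" by simp
    moreover have "(int (s n) - a) div int (block_len k) = int j"
    proof -
      define r where "r = int (s n) - a - int (j * block_len k)"
      have "0 \<le> r" "r < int (block_len k)" using n by (simp_all add: r_def)
      then have "(r + int j * int (block_len k)) div int (block_len k) = int j" by simp
      then show ?thesis by (simp add: r_def)
    qed
    ultimately show "j \<in> (\<lambda>p. nat ((int p - a) div int (block_len k))) ` ?S" by force
  qed
  then have "card {j. j < arity k \<and> hits k (a + int (j * block_len k))}
      \<le> card ((\<lambda>p. nat ((int p - a) div int (block_len k))) ` ?S)"
    by (intro card_mono) auto
  also have "\<dots> \<le> card ?S" by (intro card_image_le) auto
  also have "\<dots> \<le> defects k" by (rule defects_window)
  finally show ?thesis .
qed

lemma window_embed_in_blocks:
  assumes "range u \<subseteq> A" "aligned k a" "hits k a"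
  shows "window (embed u) a (block_len k) \<in> blocks k"
  using assms(2,3)
proof (induction k arbitrary: a)
  case 0
  then obtain n where "a = int (s n)" unfolding hits_def by (auto simp: block_len_0)
  then show ?case using assms(1) by (auto simp: window_def block_len_0 blocks_0 embed_at)
next
  case (Suc k)
  define g where "g j = window (embed u) (a + int (j * block_len k)) (block_len k)" for j
  have sub_aligned: "aligned k (a + int (j * block_len k))" for j
    by (rule aligned_Suc_sub[OF Suc.prems(1)])
  have "g j \<in> blocks k" if "j < arity k" for j
  proof (cases "hits k (a + int (j * block_len k))")
    case True
    then show ?thesis unfolding g_def by (rule Suc.IH[OF sub_aligned])
  next
    case False
    show ?thesis
      unfolding g_def embed_unhit_subblock[OF Suc.prems that False] by (rule filler_in_blocks)
  qed
  moreover have "card {j. j < arity k \<and> g j \<noteq> filler k j}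
      \<le> card {j. j < arity k \<and> hits k (a + int (j * block_len k))}"
    unfolding g_def using embed_unhit_subblock[OF Suc.prems] by (intro card_mono) auto
  then have "card {j. j < arity k \<and> g j \<noteq> filler k j} \<le> defects k"
    using card_hit_subblocks_le[of k a] by (rule order_trans)
  moreover have "window (embed u) a (block_len (Suc k)) = concat (map g [0..<arity k])"
    unfolding g_def block_len_Suc by (rule window_mult)
  ultimately show ?case unfolding blocks_Suc by blast
qed

lemma embed_in_block_shift:
  assumes "range u \<subseteq> A"
  shows "embed u \<in> block_shift"
  unfolding block_shift_def
proof (intro CollectI allI)
  fix i n
  define K where "K = nat \<bar>i\<bar> + n + s 0 + 1"
  define a where "a = - int (offset K)"
  have "int K \<le> int (offset K)" "2 * int (offset K) \<le> int (block_len K)"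
    using offset_ge[of K] offset_le[of K] by linarith+
  then have "a \<le> i" "i + int n \<le> a + int (block_len K)" "a \<le> int (s 0)" "int (s 0) < a + int (block_len K)"
    unfolding a_def K_def by linarith+
  then have "hits K a" unfolding hits_def by blast
  moreover have "aligned K a" by (simp add: aligned_def a_def)
  ultimately have "window (embed u) a (block_len K) \<in> blocks K"
    using assms by (intro window_embed_in_blocks)
  moreover have "sublist (window (embed u) i n) (window (embed u) a (block_len K))"
    using \<open>a \<le> i\<close> \<open>i + int n \<le> a + int (block_len K)\<close> by (rule sublist_window)
  ultimately show "window (embed u) i n \<in> block_language"
    unfolding block_language_def by blast
qed

lemma minimal_block_shift: "minimal_subshift block_shift"
proof (rule minimal_subshiftI[OF closedin_block_shift])
  obtain c where "c \<in> A" using A_nonempty by blast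
  then show "block_shift \<noteq> {}" using embed_in_block_shift[of "\<lambda>_. c"] by auto
qed (simp_all add: shift_pow_block_shift block_shift_recurrent)

end

theorem theorem1p4:
  fixes s :: "nat \<Rightarrow> nat"
  assumes "inj s"
    and "banach_density_zero (range s)"
  shows "\<exists>X :: (int \<Rightarrow> 'a::finite) set. minimal_subshift X \<and> zero_entropy X \<and>
           (\<forall>u :: nat \<Rightarrow> 'a. \<exists>x\<in>X. \<forall>n. x (int (s n)) = u n)"
proof -
  interpret sparse_embedding "UNIV :: 'a set" s
    using assms by unfold_locales auto
  have "\<forall>u. \<exists>x\<in>block_shift. \<forall>n. x (int (s n)) = u n"
    using embed_in_block_shift embed_at by blast
  then show ?thesis
    using minimal_block_shift zero_entropy_block_shift by blast
qed

end
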